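(* Let $\Pi_1=(\mathcal{A},\mathcal{E},\mathcal{R}_1)$ and $\Pi_2=(\mathcal{A},\mathcal{E},\mathcal{R}_2)$ be epistemic logic programs with the same SE-function, i.e. $\mathcal{SE}_{\Pi_1}(\Phi)=\mathcal{SE}_{\Pi_2}(\Phi)$ for every guess $\Phi\subseteq\mathcal{E}$. Then $\Pi_1$ and $\Pi_2$ are CWV-equivalent (and hence WV-equivalent).
   Context: A literal over a set of atoms $\mathcal{A}$ is an atom $a$ or $\neg a$. An interpretation is $I\subseteq\mathcal{A}$; $I\models a$ iff $a\in I$, $I\models\neg\ell$ iff $I\not\models\ell$. A (plain) logic program $(\mathcal{A},\mathcal{R})$ has rules $a_1\vee\cdots\vee a_l \leftarrow a_{l+1},\ldots,a_m,\neg\ell_1,\ldots,\neg\ell_n$ ($\ell_i$ literals); $H(r)$ head, $B(r)$ body, $B^+(r)=\{a_{l+1},\ldots,a_m\}$; $M\models r$ iff $M\models B(r)$ implies $M\cap H(r)\neq\emptyset$; $\mathrm{Mods}(\Pi)$ is the set of models. GL-reduct: $\Pi^I=(\mathcal{A},\{H(r)\leftarrow B^+(r)\mid r\in\mathcal{R},\ I\models\neg\ell\ \forall\neg\ell\in B(r)\})$. Answer set: model $M$ of $\Pi$ such that no $M'\subset M$ is a model of $\Pi^M$; $AS(\Pi)$ the set of answer sets ($\neg\neg\neg a$ treated as $\neg a$). An SE-model of $\Pi$ is $(X,Y)$ with $X\subseteq Y\subseteq\mathcal{A}$, $Y\models\Pi$, $X\models\Pi^Y$; $\mathrm{SE}(\Pi)$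 the set of SE-models. An ELP is $(\mathcal{A},\mathcal{E},\mathcal{R})$ with $\mathcal{E}$ a set of epistemic literals $\mathbf{not}\,\ell$ and rules $a_1\vee\cdots\vee a_k\leftarrow \ell_1,\ldots,\ell_m,\xi_1,\ldots,\xi_j,\neg\xi_{j+1},\ldots,\neg\xi_n$, $\xi_i\in\mathcal{E}$. A guess is $\Phi\subseteq\mathcal{E}$; $\mathcal{I}$ is $\Phi$-compatible w.r.t. $\mathcal{E}$ iff $\mathcal{I}\neq\emptyset$, every $\mathbf{not}\,\ell\in\Phi$ has some $I\in\mathcal{I}$ with $I\not\models\ell$, and every $\mathbf{not}\,\ell\in\mathcal{E}\setminus\Phi$ has $I\models\ell$ for all $I\in\mathcal{I}$. The epistemic reduct $\Pi^\Phi=(\mathcal{A},\mathcal{R}^\Phi)$ replaces each $\mathbf{not}\,\ell\in\Phi$ by $\top$ and every other $\mathbf{not}$ by $\neg$. A candidate world view (CWV) of $\Pi$ is a set $\mathcal{M}=AS(\Pi^\Phi)$ that is $\Phi$-compatible w.r.t. $\mathcal{E}$, for some guess $\Phi$ (its associated guess). A world view (WV) is a CWV whose associated guess $\Phi$ is subset-maximal: no CWV has an associated guess $\Phi'\supset\Phi$. Two ELPs are CWV-equivalent (WV-equivalent) iff their sets of CWVs (WVs) coincide. $\Phi$ is realizable in $\Pi$ iff some subset of $\mathrm{Mods}(\Pi^\Phi)$ is $\Phi$-compatible w.r.t. $\mathcal{E}$. The SE-function: $\mathcal{SE}_\Pi(\Phi)=\mathrm{SE}(\Pi^\Phi)$ if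 $\Phi$ is realizable in $\Pi$, and $\emptyset$ otherwise. *)

theory Defs
  imports Main
begin

(* Literals with (possibly nested) classical negation; nested negations are
   interpreted classically, so e.g. Neg (Neg (Neg a)) behaves like Neg a. *)
datatype 'a lit = Atom 'a | Neg "'a lit"

fun lsat :: "'a set \<Rightarrow> 'a lit \<Rightarrow> bool" where
  "lsat I (Atom a) = (a \<in> I)"
| "lsat I (Neg l) = (\<not> lsat I l)"

fun lit_atoms :: "'a lit \<Rightarrow> 'a set" where
  "lit_atoms (Atom a) = {a}"
| "lit_atoms (Neg l) = lit_atoms l"

definition is_literal :: "'a lit \<Rightarrow> bool" where
  "is_literal l \<longleftrightarrow> (\<exists>a. l = Atom a \<or> l = Neg (Atom a))"

(* Plain rule  H <- B+, \<not>l_1, ..., \<not>l_n :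
   phead = H, ppos = B+, pneg = {l_1,...,l_n}. *)
record 'a prule =
  phead :: "'a set"
  ppos  :: "'a set"
  pneg  :: "'a lit set"

definition body_sat :: "'a set \<Rightarrow> 'a prule \<Rightarrow> bool" where
  "body_sat M r \<longleftrightarrow> ppos r \<subseteq> M \<and> (\<forall>l\<in>pneg r. \<not> lsat M l)"

definition rule_sat :: "'a set \<Rightarrow> 'a prule \<Rightarrow> bool" where
  "rule_sat M r \<longleftrightarrow> (body_sat M r \<longrightarrow> M \<inter> phead r \<noteq> {})"

definition Mods :: "'a set \<Rightarrow> 'a prule set \<Rightarrow> 'a set set" where
  "Mods A R = {M. M \<subseteq> A \<and> (\<forall>r\<in>R. rule_sat M r)}"

definition gl_reduct :: "'a prule set \<Rightarrow> 'a set \<Rightarrow> 'a prule set" where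
  "gl_reduct R I =
     {\<lparr>phead = phead r, ppos = ppos r, pneg = {}\<rparr> | r. r \<in> R \<and> (\<forall>l\<in>pneg r. \<not> lsat I l)}"

definition AS :: "'a set \<Rightarrow> 'a prule set \<Rightarrow> 'a set set" where
  "AS A R = {M. M \<in> Mods A R \<and> \<not> (\<exists>M'. M' \<subset> M \<and> M' \<in> Mods A (gl_reduct R M))}"

definition SE :: "'a set \<Rightarrow> 'a prule set \<Rightarrow> ('a set \<times> 'a set) set" where
  "SE A R = {(X, Y). X \<subseteq> Y \<and> Y \<subseteq> A \<and> Y \<in> Mods A R \<and> X \<in> Mods A (gl_reduct R Y)}"

(* ELP rule  H <- l_1..l_m, \<xi>_1..\<xi>_j, \<not>\<xi>_{j+1}..\<not>\<xi>_n.
   An epistemic literal  not l  is represented by the literal l.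
   ehead = H, elits = {l_1..l_m}, eps = {l | not l among \<xi>_1..\<xi>_j},
   ens = {l | not l among \<xi>_{j+1}..\<xi>_n}. *)
record 'a erule =
  ehead :: "'a set"
  elits :: "'a lit set"
  eps   :: "'a lit set"
  ens   :: "'a lit set"

definition elp_wf :: "'a set \<Rightarrow> 'a lit set \<Rightarrow> 'a erule set \<Rightarrow> bool" where
  "elp_wf A E R \<longleftrightarrow>
     (\<forall>l\<in>E. is_literal l \<and> lit_atoms l \<subseteq> A) \<and>
     (\<forall>r\<in>R. ehead r \<subseteq> A \<and> (\<forall>l\<in>elits r. is_literal l \<and> lit_atoms l \<subseteq> A) \<and>
             eps r \<subseteq> E \<and> ens r \<subseteq> E)"

definition compatible :: "'a lit set \<Rightarrow> 'a lit set \<Rightarrow> 'a set set \<Rightarrow> bool" where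
  "compatible E \<Phi> \<I> \<longleftrightarrow> \<I> \<noteq> {} \<and>
     (\<forall>l\<in>\<Phi>. \<exists>I\<in>\<I>. \<not> lsat I l) \<and>
     (\<forall>l\<in>E - \<Phi>. \<forall>I\<in>\<I>. lsat I l)"

(* Epistemic reduct of a single rule: not l \<in> \<Phi> becomes \<top>, other not l
   become \<not>l.  A body element \<not>(not l) with l \<in> \<Phi> becomes \<not>\<top> = \<bottom>, so the
   rule is removed (None). *)
definition erule_reduct :: "'a lit set \<Rightarrow> 'a erule \<Rightarrow> 'a prule option" where
  "erule_reduct \<Phi> r =
     (if ens r \<inter> \<Phi> \<noteq> {} then None
      else Some \<lparr>phead = ehead r,
                 ppos = {a. Atom a \<in> elits r},
                 pneg = {l. Neg l \<in> elits r} \<union> (eps r - \<Phi>) \<union> Neg ` ens r\<rparr>)"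

definition ereduct :: "'a erule set \<Rightarrow> 'a lit set \<Rightarrow> 'a prule set" where
  "ereduct R \<Phi> = {p. \<exists>r\<in>R. erule_reduct \<Phi> r = Some p}"

definition is_cwv_for :: "'a set \<Rightarrow> 'a lit set \<Rightarrow> 'a erule set \<Rightarrow> 'a lit set \<Rightarrow> 'a set set \<Rightarrow> bool" where
  "is_cwv_for A E R \<Phi> \<M> \<longleftrightarrow> \<Phi> \<subseteq> E \<and> \<M> = AS A (ereduct R \<Phi>) \<and> compatible E \<Phi> \<M>"

definition CWV :: "'a set \<Rightarrow> 'a lit set \<Rightarrow> 'a erule set \<Rightarrow> 'a set set set" where
  "CWV A E R = {\<M>. \<exists>\<Phi>. is_cwv_for A E R \<Phi> \<M>}"

definition WV :: "'a set \<Rightarrow> 'a lit set \<Rightarrow> 'a erule set \<Rightarrow> 'a set set set" where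
  "WV A E R = {\<M>. \<exists>\<Phi>. is_cwv_for A E R \<Phi> \<M> \<and>
                   \<not> (\<exists>\<Phi>' \<M>'. \<Phi> \<subset> \<Phi>' \<and> is_cwv_for A E R \<Phi>' \<M>')}"

definition realizable :: "'a set \<Rightarrow> 'a lit set \<Rightarrow> 'a erule set \<Rightarrow> 'a lit set \<Rightarrow> bool" where
  "realizable A E R \<Phi> \<longleftrightarrow> (\<exists>\<I>. \<I> \<subseteq> Mods A (ereduct R \<Phi>) \<and> compatible E \<Phi> \<I>)"

definition SE_fun :: "'a set \<Rightarrow> 'a lit set \<Rightarrow> 'a erule set \<Rightarrow> 'a lit set \<Rightarrow> ('a set \<times> 'a set) set" where
  "SE_fun A E R \<Phi> = (if realizable A E R \<Phi> then SE A (ereduct R \<Phi>) else {})"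

end

theory Submission
  imports Defs
begin

text \<open>The answer sets of a plain program are the \<open>M\<close> such that \<open>(M, M)\<close> is an SE-model
  and no \<open>(X, M)\<close> with \<open>X \<subset> M\<close> is, so SE-models determine answer sets. A guess is
  realizable iff the SE-function is nonempty there (a compatible set of models contains some
  \<open>M\<close>, and \<open>(M, M)\<close> is an SE-model). The guess of a candidate world view is realizable,
  witnessed by the world view itself; so equal SE-functions give the reducts at that guess
  the same SE-models, hence the same answer sets, and the pairs (guess, candidate world view)
  of both programs coincide. World views are defined from these pairs alone.\<close>

lemma Mods_gl_reduct_self:
  assumes "M \<in> Mods A R"
  shows "M \<in> Mods A (gl_reduct R M)"
  using assms unfolding Mods_def gl_reduct_def rule_sat_def body_sat_def by auto

lemma SE_diag_iff_Mods: "(M, M) \<in> SE A R \<longleftrightarrow> M \<in> Mods A R"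
  using Mods_gl_reduct_self unfolding SE_def Mods_def by blast

lemma AS_eq_SE_minimal:
  "AS A R = {M. (M, M) \<in> SE A R \<and> \<not> (\<exists>X. X \<subset> M \<and> (X, M) \<in> SE A R)}"
proof (intro set_eqI iffI)
  fix M
  assume "M \<in> AS A R"
  then show "M \<in> {M. (M, M) \<in> SE A R \<and> \<not> (\<exists>X. X \<subset> M \<and> (X, M) \<in> SE A R)}"
    unfolding AS_def SE_diag_iff_Mods by (auto simp: SE_def)
next
  fix M
  assume "M \<in> {M. (M, M) \<in> SE A R \<and> \<not> (\<exists>X. X \<subset> M \<and> (X, M) \<in> SE A R)}"
  then have "M \<in> Mods A R" and "M \<subseteq> A" and "\<not> (\<exists>X. X \<subset> M \<and> (X, M) \<in> SE A R)"
    unfolding SE_diag_iff_Mods by (auto simp: Mods_def)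
  then show "M \<in> AS A R"
    unfolding AS_def SE_def by auto
qed

lemma AS_eq_if_SE_eq: "SE A R1 = SE A R2 \<Longrightarrow> AS A R1 = AS A R2"
  by (simp add: AS_eq_SE_minimal)

lemma realizable_iff_SE_fun_nonempty: "realizable A E R \<Phi> \<longleftrightarrow> SE_fun A E R \<Phi> \<noteq> {}"
proof
  assume "realizable A E R \<Phi>"
  then obtain \<I> M where "\<I> \<subseteq> Mods A (ereduct R \<Phi>)" "M \<in> \<I>"
    unfolding realizable_def compatible_def by blast
  then have "(M, M) \<in> SE_fun A E R \<Phi>"
    using \<open>realizable A E R \<Phi>\<close> by (auto simp: SE_fun_def SE_diag_iff_Mods)
  then show "SE_fun A E R \<Phi> \<noteq> {}" by blast
qed (auto simp: SE_fun_def split: if_splits)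

lemma realizable_if_is_cwv_for:
  assumes "is_cwv_for A E R \<Phi> \<M>"
  shows "realizable A E R \<Phi>"
proof -
  have "\<M> \<subseteq> Mods A (ereduct R \<Phi>)" and "compatible E \<Phi> \<M>"
    using assms unfolding is_cwv_for_def AS_def by auto
  then show ?thesis unfolding realizable_def by blast
qed

lemma is_cwv_for_if_SE_fun_eq:
  assumes SE_fun_eq: "SE_fun A E R1 \<Phi> = SE_fun A E R2 \<Phi>"
    and cwv: "is_cwv_for A E R1 \<Phi> \<M>"
  shows "is_cwv_for A E R2 \<Phi> \<M>"
proof -
  have realizable1: "realizable A E R1 \<Phi>"
    using cwv by (rule realizable_if_is_cwv_for)
  then have realizable2: "realizable A E R2 \<Phi>"
    using SE_fun_eq by (simp add: realizable_iff_SE_fun_nonempty)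
  have "SE A (ereduct R1 \<Phi>) = SE A (ereduct R2 \<Phi>)"
    using SE_fun_eq realizable1 realizable2 by (simp add: SE_fun_def)
  then have "AS A (ereduct R1 \<Phi>) = AS A (ereduct R2 \<Phi>)"
    by (rule AS_eq_if_SE_eq)
  then show ?thesis
    using cwv unfolding is_cwv_for_def by auto
qed

theorem lemma2:
  assumes "elp_wf A E R1" and "elp_wf A E R2"
    and "\<forall>\<Phi>. \<Phi> \<subseteq> E \<longrightarrow> SE_fun A E R1 \<Phi> = SE_fun A E R2 \<Phi>"
  shows "CWV A E R1 = CWV A E R2 \<and> WV A E R1 = WV A E R2"
proof -
  have "is_cwv_for A E R1 \<Phi> \<M> \<longleftrightarrow> is_cwv_for A E R2 \<Phi> \<M>" for \<Phi> \<M>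
  proof (cases "\<Phi> \<subseteq> E")
    case True
    then have "SE_fun A E R1 \<Phi> = SE_fun A E R2 \<Phi>"
      using assms(3) by blast
    then show ?thesis
      using is_cwv_for_if_SE_fun_eq[of A E R1 \<Phi> R2] is_cwv_for_if_SE_fun_eq[of A E R2 \<Phi> R1]
      by metis
  next
    case False
    then show ?thesis unfolding is_cwv_for_def by blast
  qed
  then show ?thesis
    unfolding CWV_def WV_def by simp
qed

end
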